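(* For every $\mathbf y\in\mathbb{R}^3$ and every integer $l\ge0$ there is a vector $Q^l(\mathbf y)=(Q^l_m(\mathbf y))_{m=-l}^{l}\in\mathbb{C}^{2l+1}$ of Euclidean norm $1$ such that, for every $\mathbf x\in\mathbb{R}^3$ with spherical coordinates $(R,\theta,\phi)$ and $R>r:=\|\mathbf y\|$, $$\log\|\mathbf x-\mathbf y\|=\log R-\sum_{n=1}^\infty\frac{a_n}{R^n}\sum_{l=0}^nL_{nl}\sqrt{\frac{4\pi}{2l+1}}\sum_{m=-l}^{l}Q^l_m(\mathbf y)\,Y_l^m(\theta,\phi),\qquad a_n=\frac{r^n}{n}.$$
   Context: Spherical coordinates $(R,\theta,\phi)$ are centered at the origin, with $\theta\in[0,\pi]$ the polar angle and $\phi\in[0,2\pi)$. The spherical harmonics are $Y_l^m(\theta,\phi)=\sqrt{\frac{2l+1}{4\pi}\frac{(l-|m|)!}{(l+|m|)!}}\,P_l^{|m|}(\cos\theta)e^{im\phi}$ for $l\ge0$, $-l\le m\le l$, where $P_n^m(x)=(-1)^m(1-x^2)^{m/2}\frac{d^m}{dx^m}P_n(x)$ and $P_n$ is the Legendre polynomial of degree $n$. With $\Lambda(z)=\frac{\Gamma(z+1/2)}{\Gamma(z+1)}$, the coefficients $L_{nl}$ ($0\le l\le n$) are $L_{nl}=1$ if $n=l=0$; $L_{nl}=\frac{\sqrt\pi}{2\Lambda(n)}$ if $n=l>0$; $L_{nl}=\frac{-n(l+1/2)}{(n+l+1)(n-l)}\Lambda\!\left(\frac{n-l-2}{2}\right)\Lambda\!\left(\frac{n+l-1}{2}\right)$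 if $n>l$ and $n+l$ is even; $L_{nl}=0$ otherwise. (These are the coefficients of the Chebyshev polynomial $T_n$ in the Legendre basis: $T_n=\sum_{l=0}^nL_{nl}P_l$.) *)

theory Defs
  imports "HOL-Analysis.Analysis" "HOL-Computational_Algebra.Polynomial"
begin

definition legendre_poly :: "nat \<Rightarrow> real poly" where
  "legendre_poly n = smult (1 / (2 ^ n * fact n)) ((pderiv ^^ n) ([:-1, 0, 1:] ^ n))"

definition assoc_legendre :: "nat \<Rightarrow> nat \<Rightarrow> real \<Rightarrow> real" where
  "assoc_legendre n m x = (-1) ^ m * sqrt (1 - x\<^sup>2) ^ m * poly ((pderiv ^^ m) (legendre_poly n)) x"

definition sph_harm :: "nat \<Rightarrow> int \<Rightarrow> real \<Rightarrow> real \<Rightarrow> complex" where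
  "sph_harm l m \<theta> \<phi> =
     complex_of_real (sqrt ((2 * real l + 1) / (4 * pi) * fact (l - nat \<bar>m\<bar>) / fact (l + nat \<bar>m\<bar>))
       * assoc_legendre l (nat \<bar>m\<bar>) (cos \<theta>)) * exp (\<i> * of_int m * of_real \<phi>)"

text \<open>Spherical coordinates of a point of R^3: polar angle in [0,pi], azimuth in [0,2pi).\<close>
definition sph_theta :: "real ^ 3 \<Rightarrow> real" where
  "sph_theta x = arccos (x $ 3 / norm x)"

definition sph_phi :: "real ^ 3 \<Rightarrow> real" where
  "sph_phi x = (let a = Arg (Complex (x $ 1) (x $ 2)) in if a < 0 then a + 2 * pi else a)"

definition Lam :: "real \<Rightarrow> real" where
  "Lam z = Gamma (z + 1/2) / Gamma (z + 1)"

definition Lcoef :: "nat \<Rightarrow> nat \<Rightarrow> real" where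
  "Lcoef n l =
    (if n = 0 \<and> l = 0 then 1
     else if n = l then sqrt pi / (2 * Lam (real n))
     else if l < n \<and> even (n + l) then
       (- (real n * (real l + 1/2)) / ((real n + real l + 1) * (real n - real l)))
         * Lam ((real n - real l - 2) / 2) * Lam ((real n + real l - 1) / 2)
     else 0)"

end

theory Submission
  imports Defs
begin

(* With R = |x|, r = |y|, t = r/R and gamma the angle between x and y,
   log |x - y| = log R + 1/2 log (1 - 2 t cos gamma + t^2), and
   -1/2 log (1 - 2 t cos psi + t^2) = sum_n t^n cos (n psi) / n is the real part of -log (1 - t e^(i psi)).
   Next, cos (n gamma) = T_n (cos gamma) = sum_l L_nl P_l (cos gamma), which follows from the three-term
   recursions of T_n and P_l. Finally the addition theorem
   P_l (cos gamma) = 4 pi / (2l + 1) * sum_m Y_l^m (x) * cnj (Y_l^m (y)) exhibits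
   Q^l_m (y) = sqrt (4 pi / (2l + 1)) * cnj (Y_l^m (y)), of norm 1 by the addition theorem at gamma = 0.
   The addition theorem is proved algebraically: with half angles s = sin (theta/2), c = cos (theta/2) the
   associated Legendre functions are the coefficients of the binary form (c X - s)^l (s X + c)^l, P_l (cos gamma)
   is the middle coefficient of a composite of two such linear substitutions, and multiplying out the
   composite gives the sum over m. *)

section \<open>Legendre polynomials\<close>

lemma coeff_linear_power:
  fixes a b :: "'a::comm_semiring_1"
  shows "coeff ([:b, a:] ^ n) k = of_nat (n choose k) * a ^ k * b ^ (n - k)"
proof (cases "k \<le> n")
  case True
  then show ?thesis by (simp add: coeff_linear_poly_power)
next
  case False
  have "degree ([:b, a:] ^ n) \<le> n"
    by (rule order.trans[OF degree_power_le]) simp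
  with False show ?thesis by (simp add: coeff_eq_0 binomial_eq_0)
qed

lemma coeff_linear_powers_mult:
  fixes a b c d :: "'a::comm_semiring_1"
  shows "coeff ([:b, a:] ^ p * [:d, c:] ^ q) n =
    (\<Sum>i\<le>n. of_nat (p choose i) * a ^ i * b ^ (p - i) *
      (of_nat (q choose (n - i)) * c ^ (n - i) * d ^ (q - (n - i))))"
  by (simp add: coeff_mult coeff_linear_power)

lemma poly_higher_pderiv_eq_coeff_pcompose:
  fixes p :: "'a::{idom, semiring_char_0} poly"
  shows "poly ((pderiv ^^ N) p) y = fact N * coeff (p \<circ>\<^sub>p [:y, 1:]) N"
proof -
  have shift: "(pderiv ^^ n) (p \<circ>\<^sub>p [:y, 1:]) = ((pderiv ^^ n) p) \<circ>\<^sub>p [:y, 1:]" for n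
    by (induction n) (simp_all add: pderiv_pcompose pderiv_pCons)
  have "poly ((pderiv ^^ N) p) y = poly (((pderiv ^^ N) p) \<circ>\<^sub>p [:y, 1:]) 0"
    by (simp add: poly_pcompose)
  also have "\<dots> = coeff ((pderiv ^^ N) (p \<circ>\<^sub>p [:y, 1:])) 0"
    by (simp add: shift poly_0_coeff_0)
  also have "\<dots> = fact N * coeff (p \<circ>\<^sub>p [:y, 1:]) N"
    by (simp add: coeff_higher_pderiv pochhammer_fact)
  finally show ?thesis .
qed

lemma poly_higher_pderiv_legendre_poly:
  "poly ((pderiv ^^ m) (legendre_poly l)) y =
     fact (m + l) / (2 ^ l * fact l) * coeff ([:y - 1, 1:] ^ l * [:y + 1, 1:] ^ l) (m + l)"
proof -
  have pcompose_power: "(q ^ n) \<circ>\<^sub>p r = (q \<circ>\<^sub>p r) ^ n" for q r :: "real poly" and n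
    by (induction n) (simp_all add: pcompose_mult pcompose_1)
  have "[:-1, 0, 1:] \<circ>\<^sub>p [:y, 1:] = [:y - 1, 1:] * [:y + 1, 1:]"
    by (simp add: pcompose_pCons algebra_simps)
  then have "[:-1, 0, 1:] ^ l \<circ>\<^sub>p [:y, 1:] = [:y - 1, 1:] ^ l * [:y + 1, 1:] ^ l"
    by (simp only: pcompose_power power_mult_distrib)
  moreover have "(pderiv ^^ m) (legendre_poly l) =
      smult (1 / (2 ^ l * fact l)) ((pderiv ^^ (m + l)) ([:-1, 0, 1:] ^ l))"
    unfolding legendre_poly_def higher_pderiv_smult funpow_add by simp
  ultimately show ?thesis
    by (simp add: poly_higher_pderiv_eq_coeff_pcompose)
qed

lemma legendre_poly_0 [simp]: "legendre_poly 0 = 1"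
  by (simp add: legendre_poly_def)

lemma legendre_poly_Suc_0 [simp]: "legendre_poly (Suc 0) = [:0, 1:]"
  by (simp add: legendre_poly_def pderiv_pCons)

lemma poly_legendre_poly_1 [simp]: "poly (legendre_poly l) 1 = 1"
proof -
  have "coeff ([:0, 1:] ^ l * [:2, 1:] ^ l) l = (\<Sum>i\<le>l. if i = l then (2::real) ^ l else 0)"
    unfolding coeff_linear_powers_mult by (intro sum.cong refl) (auto simp: power_0_left)
  then show ?thesis
    using poly_higher_pderiv_legendre_poly[of 0 l 1] by simp
qed

lemma higher_pderiv_monom_1_mult:
  fixes f :: "'a::idom poly"
  shows "(pderiv ^^ Suc n) ([:0, 1:] * f) =
    [:0, 1:] * (pderiv ^^ Suc n) f + smult (of_nat (Suc n)) ((pderiv ^^ n) f)"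
proof (induction n)
  case 0
  then show ?case by (simp add: pderiv_mult pderiv_pCons)
next
  case (Suc n)
  have "(pderiv ^^ Suc (Suc n)) ([:0, 1:] * f) = pderiv ((pderiv ^^ Suc n) ([:0, 1:] * f))"
    by simp
  also have "\<dots> = [:0, 1:] * (pderiv ^^ Suc (Suc n)) f + smult (of_nat (Suc (Suc n))) ((pderiv ^^ Suc n) f)"
    by (simp only: Suc) (simp add: pderiv_add pderiv_smult pderiv_mult pderiv_pCons smult_add_left numeral_mult_conv_smult)
  finally show ?case .
qed

lemma pderiv_x2_minus_1_power_Suc:
  "pderiv ([:-1, 0, 1:] ^ Suc l) = smult (2 * of_nat (Suc l)) ([:0, 1:] * [:-1, 0, 1:] ^ l :: real poly)"
proof -
  have "pderiv [:-1, 0, 1::real:] = smult 2 [:0, 1:]"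
    by (simp add: pderiv_pCons)
  then show ?thesis
    by (simp only: pderiv_power_Suc) (simp add: algebra_simps)
qed

lemma legendre_normalization_Suc:
  "1 / (2 ^ Suc l * fact (Suc l)) * (2 * of_nat (Suc l)) = (1 / (2 ^ l * fact l) :: real)"
  by (simp add: fact_Suc divide_simps)

lemma legendre_poly_Suc_rodrigues:
  "legendre_poly (Suc l) =
    smult (1 / (2 ^ l * fact l)) ((pderiv ^^ l) ([:0, 1:] * [:-1, 0, 1:] ^ l))"
proof -
  have "legendre_poly (Suc l) =
      smult (1 / (2 ^ Suc l * fact (Suc l))) ((pderiv ^^ l) (pderiv ([:-1, 0, 1:] ^ Suc l)))"
    by (simp only: legendre_poly_def funpow_Suc_right o_apply)
  also have "\<dots> = smult (1 / (2 ^ Suc l * fact (Suc l)) * (2 * of_nat (Suc l)))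
      ((pderiv ^^ l) ([:0, 1:] * [:-1, 0, 1:] ^ l))"
    by (simp only: pderiv_x2_minus_1_power_Suc higher_pderiv_smult smult_smult)
  also note legendre_normalization_Suc
  finally show ?thesis .
qed

lemma pderiv_legendre_poly_Suc:
  "pderiv (legendre_poly (Suc l)) =
    [:0, 1:] * pderiv (legendre_poly l) + smult (of_nat (Suc l)) (legendre_poly l)"
proof -
  let ?u = "[:-1, 0, 1:] ^ l :: real poly" and ?c = "1 / (2 ^ l * fact l) :: real"
  have "pderiv (legendre_poly (Suc l)) = smult ?c ((pderiv ^^ Suc l) ([:0, 1:] * ?u))"
    by (simp only: legendre_poly_Suc_rodrigues pderiv_smult) simp
  also have "\<dots> = [:0, 1:] * smult ?c ((pderiv ^^ Suc l) ?u) + smult (of_nat (Suc l)) (smult ?c ((pderiv ^^ l) ?u))"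
    by (simp only: higher_pderiv_monom_1_mult smult_add_right mult_smult_right smult_smult mult.commute)
  also have "\<dots> = [:0, 1:] * pderiv (legendre_poly l) + smult (of_nat (Suc l)) (legendre_poly l)"
    by (simp add: legendre_poly_def pderiv_smult)
  finally show ?thesis .
qed

lemma pderiv_legendre_poly_Suc_Suc:
  "pderiv (legendre_poly (Suc (Suc l))) =
    smult (2 * of_nat l + 3) (legendre_poly (Suc l)) + pderiv (legendre_poly l)"
proof -
  let ?u = "\<lambda>l. [:-1, 0, 1:] ^ l :: real poly"
  have "[:0, 1:] * ([:0, 1:] * ?u l) = ?u (Suc l) + ?u l"
  proof -
    have "[:0, 1:] * [:0, 1::real:] = [:-1, 0, 1:] + 1"
      by (simp add: one_pCons)
    then show ?thesis
      by (simp only: mult.assoc[symmetric] power_Suc distrib_right mult_1_left)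
  qed
  then have "pderiv ([:0, 1:] * ?u (Suc l)) = ?u (Suc l) + smult (2 * of_nat (Suc l)) (?u (Suc l) + ?u l)"
    by (simp only: pderiv_mult pderiv_x2_minus_1_power_Suc mult_smult_right)
      (simp add: pderiv_pCons)
  also have "\<dots> = smult (2 * of_nat l + 3) (?u (Suc l)) + smult (2 * of_nat (Suc l)) (?u l)"
    by (intro poly_ext) (simp add: algebra_simps)
  finally have "pderiv ([:0, 1:] * ?u (Suc l)) =
      smult (2 * of_nat l + 3) (?u (Suc l)) + smult (2 * of_nat (Suc l)) (?u l)" .
  then have "pderiv (legendre_poly (Suc (Suc l))) =
      smult (1 / (2 ^ Suc l * fact (Suc l)))
        (smult (2 * of_nat l + 3) ((pderiv ^^ Suc l) (?u (Suc l))) +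
         smult (2 * of_nat (Suc l)) ((pderiv ^^ Suc l) (?u l)))"
    by (simp only: legendre_poly_Suc_rodrigues pderiv_smult funpow_swap1 higher_pderiv_add
        higher_pderiv_smult)
  also have "\<dots> = smult (2 * of_nat l + 3) (legendre_poly (Suc l)) +
      smult (1 / (2 ^ Suc l * fact (Suc l)) * (2 * of_nat (Suc l))) ((pderiv ^^ Suc l) (?u l))"
    by (simp only: legendre_poly_def smult_add_right smult_smult mult.commute)
  also have "\<dots> = smult (2 * of_nat l + 3) (legendre_poly (Suc l)) + pderiv (legendre_poly l)"
    by (simp only: legendre_normalization_Suc legendre_poly_def pderiv_smult funpow.simps o_apply)
  finally show ?thesis .
qed

text \<open>Bonnet's recursion. The difference of the two sides, as a polynomial, has vanishing
  derivative by the two derivative recursions, and it vanishes at 1.\<close>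
lemma legendre_poly_three_term_recurrence:
  "of_nat (Suc (Suc l)) * poly (legendre_poly (Suc (Suc l))) x =
     (2 * of_nat l + 3) * x * poly (legendre_poly (Suc l)) x - of_nat (Suc l) * poly (legendre_poly l) x"
proof -
  let ?P = legendre_poly
  define Q where "Q = smult (of_nat (Suc (Suc l))) (?P (Suc (Suc l)))
      - smult (2 * of_nat l + 3) ([:0, 1:] * ?P (Suc l)) + smult (of_nat (Suc l)) (?P l)"
  have "poly (pderiv Q) y = 0" for y
  proof -
    have "y * poly (pderiv (?P (Suc l))) y = (of_nat l + 1) * poly (?P (Suc l)) y + poly (pderiv (?P l)) y"
      using arg_cong[OF pderiv_legendre_poly_Suc[of "Suc l"], of "\<lambda>p. poly p y"]
        arg_cong[OF pderiv_legendre_poly_Suc_Suc[of l], of "\<lambda>p. poly p y"]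
      by (simp add: algebra_simps)
    moreover have "poly (pderiv Q) y = of_nat (Suc (Suc l)) * poly (pderiv (?P (Suc (Suc l)))) y
        - (2 * of_nat l + 3) * (poly (?P (Suc l)) y + y * poly (pderiv (?P (Suc l))) y)
        + of_nat (Suc l) * poly (pderiv (?P l)) y"
      by (simp add: Q_def pderiv_add pderiv_diff pderiv_smult pderiv_mult pderiv_pCons algebra_simps)
    ultimately show ?thesis
      by (simp add: pderiv_legendre_poly_Suc_Suc algebra_simps)
  qed
  then have "degree Q = 0"
    by (simp add: poly_ext pderiv_eq_0_iff[symmetric])
  then have "poly Q x = poly Q 1"
    by (metis degree_0_id poly_pCons mult_zero_right poly_0 add_0_right)
  also have "\<dots> = 0"
    by (simp add: Q_def)
  finally show ?thesis
    by (simp add: Q_def algebra_simps)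
qed

lemma x_mult_poly_legendre_poly:
  "x * poly (legendre_poly l) x =
    real (Suc l) / (2 * real l + 1) * poly (legendre_poly (Suc l)) x +
    real l / (2 * real l + 1) * poly (legendre_poly (l - 1)) x"
proof -
  let ?p = "\<lambda>l. poly (legendre_poly l) x"
  have "(2 * real l + 1) * (x * ?p l) = real (Suc l) * ?p (Suc l) + real l * ?p (l - 1)"
  proof (cases l)
    case (Suc k)
    then show ?thesis
      using legendre_poly_three_term_recurrence[of k x] by (simp add: algebra_simps)
  qed simp
  moreover have "2 * real l + 1 \<noteq> 0"
    by linarith
  ultimately show ?thesis
    by (simp add: add_divide_distrib[symmetric] nonzero_eq_divide_eq mult.commute)
qed

section \<open>The Chebyshev--Legendre expansion\<close>

fun chebyshev_T :: "nat \<Rightarrow> real \<Rightarrow> real" where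
  "chebyshev_T 0 x = 1"
| "chebyshev_T (Suc 0) x = x"
| "chebyshev_T (Suc (Suc n)) x = 2 * x * chebyshev_T (Suc n) x - chebyshev_T n x"

lemma chebyshev_T_cos: "chebyshev_T n (cos t) = cos (real n * t)"
proof (induction n rule: induct_nat_012)
  case (ge2 n)
  have "cos (real (Suc (Suc n)) * t) + cos (real n * t) =
      cos (real (Suc n) * t + t) + cos (real (Suc n) * t - t)"
    by (simp add: algebra_simps)
  also have "\<dots> = 2 * cos t * cos (real (Suc n) * t)"
    by (simp add: cos_add cos_diff)
  finally show ?case
    using ge2.IH by simp
qed simp_all

lemma Lam_pos: "z > -1/2 \<Longrightarrow> Lam z > 0"
  unfolding Lam_def by (intro divide_pos_pos Gamma_real_pos) simp_all

lemma Gamma_plus1_pos: "z > 0 \<Longrightarrow> Gamma (z + 1) = z * Gamma (z::real)"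
  by (rule Gamma_plus1) (auto dest: nonpos_Ints_nonpos)

lemma Lam_plus_1:
  assumes "z > -1/2"
  shows "Lam (z + 1) = Lam z * (z + 1/2) / (z + 1)"
proof -
  have "Gamma (z + 1 + 1/2) = (z + 1/2) * Gamma (z + 1/2)"
    using Gamma_plus1_pos[of "z + 1/2"] assms by (simp add: add_ac)
  moreover have "Gamma (z + 1 + 1) = (z + 1) * Gamma (z + 1)"
    using Gamma_plus1_pos[of "z + 1"] assms by simp
  ultimately have "Lam (z + 1) = ((z + 1/2) * Gamma (z + 1/2)) / ((z + 1) * Gamma (z + 1))"
    by (simp only: Lam_def)
  then show ?thesis
    by (simp add: Lam_def mult.commute)
qed

lemma Lam_mult_Lam_plus_half:
  assumes "z > -1/2"
  shows "Lam z * Lam (z + 1/2) = 1 / (z + 1/2)"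
proof -
  have "Lam z * Lam (z + 1/2) = Gamma (z + 1/2) / Gamma (z + 1) * (Gamma (z + 1) / Gamma (z + 1/2 + 1))"
    by (simp add: Lam_def add.commute)
  also have "Gamma (z + 1/2 + 1) = (z + 1/2) * Gamma (z + 1/2)"
    using Gamma_plus1_pos[of "z + 1/2"] assms by simp
  also have "Gamma (z + 1/2) / Gamma (z + 1) * (Gamma (z + 1) / ((z + 1/2) * Gamma (z + 1/2))) = 1 / (z + 1/2)"
  proof -
    have "Gamma (z + 1) > 0" "Gamma (z + 1/2) > 0"
      using assms by (intro Gamma_real_pos; simp)+
    then show ?thesis
      by simp
  qed
  finally show ?thesis .
qed

lemma Lam_0: "Lam 0 = sqrt pi"
  by (simp add: Lam_def Gamma_one_half_real)

lemma Lam_1: "Lam 1 = sqrt pi / 2"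
  using Lam_plus_1[of 0] by (simp add: Lam_0)

lemma Lcoef_0_0: "Lcoef 0 0 = 1"
  by (simp add: Lcoef_def)

lemma Lcoef_diag: "n \<ge> 1 \<Longrightarrow> Lcoef n n = sqrt pi / (2 * Lam (real n))"
  by (simp add: Lcoef_def)

lemma Lcoef_above_diag: "n < l \<Longrightarrow> Lcoef n l = 0"
  by (simp add: Lcoef_def)

lemma Lcoef_odd: "odd (n + l) \<Longrightarrow> Lcoef n l = 0"
  by (auto simp: Lcoef_def)

text \<open>The closed form below the diagonal, with the arguments of \<^const>\<open>Lam\<close> left open so
  that it can be instantiated with the parametrisation at hand.\<close>
lemma Lcoef_below_diag:
  assumes "l < n" "even (n + l)"
    and "real n = n'" "real l = l'" "(n' - l' - 2) / 2 = A" "(n' + l' - 1) / 2 = B"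
  shows "Lcoef n l = -(n' * (l' + 1/2)) / ((n' + l' + 1) * (n' - l')) * Lam A * Lam B"
  using assms by (auto simp: Lcoef_def)

lemma Lcoef_recurrence_generic:
  assumes "odd (N + k)" "k + 3 \<le> N"
  shows "Lcoef (Suc N) k = 2 * real k / (2 * real k - 1) * Lcoef N (k - 1)
      + 2 * (real k + 1) / (2 * real k + 3) * Lcoef N (Suc k) - Lcoef (N - 1) k"
proof -
  define n r where "n = real N" and "r = real k"
  define a b where "a = (n - r - 3) / 2" and "b = (n + r - 2) / 2"
  have "2 * r - 1 \<noteq> 0"
  proof
    assume "2 * r - 1 = 0"
    then have "real (2 * k) = real 1"
      by (simp add: r_def)
    then show False
      by (simp only: of_nat_eq_iff) presburger
  qed
  then have nr: "n \<ge> r + 3" "r \<ge> 0" "2 * r - 1 \<noteq> 0"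
    using assms(2) by (simp_all add: n_def r_def)
  have LA: "Lam (a + 1) = Lam a * (n - r - 2) / (n - r - 1)"
    using Lam_plus_1[of a] nr by (simp add: a_def field_simps)
  have LB: "Lam (b + 1) = Lam b * (n + r - 1) / (n + r)"
    using Lam_plus_1[of b] nr by (simp add: b_def field_simps)
  have e1: "Lcoef (Suc N) k = -((n + 1) * (r + 1/2)) / (((n + 1) + r + 1) * ((n + 1) - r)) * Lam (a + 1) * Lam (b + 1)"
    by (rule Lcoef_below_diag) (use assms in \<open>simp_all add: n_def r_def a_def b_def field_simps\<close>)
  have e2: "Lcoef N (k - 1) = -(n * ((r - 1) + 1/2)) / ((n + (r - 1) + 1) * (n - (r - 1))) * Lam (a + 1) * Lam b"
    if "k \<noteq> 0"
    by (rule Lcoef_below_diag) (use assms that in \<open>simp_all add: n_def r_def a_def b_def of_nat_diff field_simps\<close>)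
  have e3: "Lcoef N (Suc k) = -(n * ((r + 1) + 1/2)) / ((n + (r + 1) + 1) * (n - (r + 1))) * Lam a * Lam (b + 1)"
    by (rule Lcoef_below_diag) (use assms in \<open>simp_all add: n_def r_def a_def b_def field_simps\<close>)
  have e4: "Lcoef (N - 1) k = -((n - 1) * (r + 1/2)) / (((n - 1) + r + 1) * ((n - 1) - r)) * Lam a * Lam b"
    by (rule Lcoef_below_diag) (use assms in \<open>simp_all add: n_def r_def a_def b_def of_nat_diff field_simps\<close>)
  show ?thesis
  proof (cases "k = 0")
    case True
    then show ?thesis
      unfolding e1 e3 e4 LA LB using nr by (simp add: r_def divide_simps) (simp add: algebra_simps)
  next
    case False
    then show ?thesis
      unfolding e1 e2[OF False] e3 e4 LA LB r_def[symmetric] using nr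
      by (simp add: divide_simps) (simp add: algebra_simps)
  qed
qed

lemma Lcoef_recurrence_diag:
  assumes "N \<ge> 1"
  shows "Lcoef (Suc N) (Suc N) = 2 * real (Suc N) / (2 * real (Suc N) - 1) * Lcoef N N"
proof -
  have "Lam (real N) > 0" "Lam (real (Suc N)) > 0"
    by (rule Lam_pos, simp)+
  moreover have "Lam (real (Suc N)) = Lam (real N) * (real N + 1/2) / (real N + 1)"
    using Lam_plus_1[of "real N"] by (simp add: add.commute)
  ultimately show ?thesis
    using assms by (simp add: Lcoef_diag divide_simps) (simp add: algebra_simps)
qed

lemma Lcoef_recurrence_subdiag:
  assumes "N \<ge> 2"
  shows "Lcoef (Suc N) (N - 1) = 2 * real (N - 1) / (2 * real (N - 1) - 1) * Lcoef N (N - 2)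
      + 2 * real N / (2 * real (N - 1) + 3) * Lcoef N N - Lcoef (N - 1) (N - 1)"
proof -
  define n where "n = real N"
  define lam where "lam = Lam (n - 1)"
  have n2: "n \<ge> 2"
    using assms by (simp add: n_def)
  have lam0: "lam > 0"
    unfolding lam_def using n2 by (intro Lam_pos) simp
  have LN: "Lam n = lam * (n - 1/2) / n"
    using Lam_plus_1[of "n - 1"] n2 by (simp add: lam_def algebra_simps)
  have Lh1: "Lam (n - 1/2) = 1 / ((n - 1/2) * lam)"
    using Lam_mult_Lam_plus_half[of "n - 1"] n2 lam0 by (simp add: lam_def field_simps)
  have Lh2: "Lam (n - 3/2) = 1 / ((n - 1) * lam)"
  proof -
    have "n - 3/2 + 1/2 = n - 1"
      by simp
    then have "Lam (n - 3/2) * lam = 1 / (n - 1)"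
      using Lam_mult_Lam_plus_half[of "n - 3/2"] n2 by (simp only: lam_def)
    then show ?thesis
      using lam0 n2 by (simp add: field_simps)
  qed
  have e1: "Lcoef (Suc N) (N - 1) =
      -((n + 1) * ((n - 1) + 1/2)) / (((n + 1) + (n - 1) + 1) * ((n + 1) - (n - 1))) * Lam 0 * Lam (n - 1/2)"
    by (rule Lcoef_below_diag) (use assms in \<open>simp_all add: n_def of_nat_diff field_simps\<close>)
  have e2: "Lcoef N (N - 2) = -(n * ((n - 2) + 1/2)) / ((n + (n - 2) + 1) * (n - (n - 2))) * Lam 0 * Lam (n - 3/2)"
    by (rule Lcoef_below_diag) (use assms in \<open>simp_all add: n_def of_nat_diff field_simps\<close>)
  have e3: "Lcoef N N = sqrt pi / (2 * Lam n)" and e4: "Lcoef (N - 1) (N - 1) = sqrt pi / (2 * lam)"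
    using assms by (simp_all add: Lcoef_diag n_def lam_def of_nat_diff)
  have "real (N - 1) = n - 1" "real (N - 2) = n - 2"
    using assms by (simp_all add: n_def of_nat_diff)
  moreover have "2 * n + 1 \<noteq> 0" "2 * n - 1 \<noteq> 0" "n - 1/2 \<noteq> 0" "n - 1 \<noteq> 0" "n \<noteq> 0"
    "2 * n - 3 \<noteq> 0" "2 * n - 2 \<noteq> 0"
    using n2 by linarith+
  ultimately show ?thesis
    unfolding e1 e2 e3 e4 LN Lh1 Lh2 Lam_0 n_def[symmetric] using lam0
    by (simp add: divide_simps) (simp add: algebra_simps)
qed

text \<open>For \<open>k = 0\<close> the first term vanishes, whatever the truncated \<open>k - 1\<close> gives.\<close>
lemma Lcoef_recurrence:
  assumes "N \<ge> 1"
  shows "Lcoef (Suc N) k = 2 * real k / (2 * real k - 1) * Lcoef N (k - 1)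
      + 2 * (real k + 1) / (2 * real k + 3) * Lcoef N (Suc k) - Lcoef (N - 1) k"
proof -
  have "even (N + k) \<or> (odd (N + k) \<and> Suc N < k) \<or> k = Suc N \<or> k = N - 1 \<or>
      (odd (N + k) \<and> k + 3 \<le> N)"
    using assms by presburger
  then consider "even (N + k)" | "odd (N + k)" "Suc N < k" | "k = Suc N" | "k = N - 1"
    | "odd (N + k)" "k + 3 \<le> N"
    by blast
  then show ?thesis
  proof cases
    case 1
    then show ?thesis
      using assms by (cases k) (simp_all add: Lcoef_odd)
  next
    case 2
    then have "Lcoef (Suc N) k = 0" "Lcoef N (k - 1) = 0" "Lcoef N (Suc k) = 0" "Lcoef (N - 1) k = 0"
      by (intro Lcoef_above_diag; linarith)+
    then show ?thesis
      by simp
  next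
    case 3
    then show ?thesis
      using assms by (simp add: Lcoef_above_diag Lcoef_recurrence_diag)
  next
    case 4
    show ?thesis
    proof (cases "N = 1")
      case True
      have "Lcoef 2 0 = -(1/6) * (Lam 0 * Lam (0 + 1/2))"
        by (subst Lcoef_below_diag[where n' = 2 and l' = 0]) simp_all
      also have "\<dots> = -1/3"
        by (subst Lam_mult_Lam_plus_half) simp_all
      finally show ?thesis
        using True 4 by (simp add: numeral_2_eq_2 Lcoef_0_0 Lcoef_diag Lam_1)
    next
      case False
      then have "N \<ge> 2"
        using assms by simp
      then show ?thesis
        using 4 Lcoef_recurrence_subdiag[of N] by (simp add: numeral_2_eq_2 Suc_diff_Suc)
    qed
  next
    case 5
    then show ?thesis
      by (rule Lcoef_recurrence_generic)
  qed
qed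

lemma x_mult_legendre_sum:
  assumes "\<And>l. l > N \<Longrightarrow> c l = 0"
  shows "x * (\<Sum>l\<le>N. c l * poly (legendre_poly l) x) =
    (\<Sum>k\<le>Suc N. (c (k - 1) * real k / (2 * real k - 1) + c (Suc k) * (real k + 1) / (2 * real k + 3))
      * poly (legendre_poly k) x)"
proof -
  let ?p = "\<lambda>l. poly (legendre_poly l) x"
  have "x * (\<Sum>l\<le>N. c l * ?p l) = (\<Sum>l\<le>N. c l * (x * ?p l))"
    by (simp add: sum_distrib_left mult.left_commute)
  also have "\<dots> = (\<Sum>l\<le>N. c l * real (Suc l) / (2 * real l + 1) * ?p (Suc l) +
      c l * real l / (2 * real l + 1) * ?p (l - 1))"
    by (simp add: x_mult_poly_legendre_poly algebra_simps)
  also have "\<dots> = (\<Sum>l\<le>N. c l * real (Suc l) / (2 * real l + 1) * ?p (Suc l)) +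
      (\<Sum>l\<le>N. c l * real l / (2 * real l + 1) * ?p (l - 1))"
    by (rule sum.distrib)
  also have "(\<Sum>l\<le>N. c l * real (Suc l) / (2 * real l + 1) * ?p (Suc l)) =
      (\<Sum>k\<le>Suc N. c (k - 1) * real k / (2 * real k - 1) * ?p k)"
    by (subst sum.atMost_Suc_shift) (simp add: algebra_simps)
  also have "(\<Sum>l\<le>N. c l * real l / (2 * real l + 1) * ?p (l - 1)) =
      (\<Sum>l\<le>Suc (Suc N). c l * real l / (2 * real l + 1) * ?p (l - 1))"
    using assms by simp
  also have "\<dots> = (\<Sum>k\<le>Suc N. c (Suc k) * (real k + 1) / (2 * real k + 3) * ?p k)"
    by (subst sum.atMost_Suc_shift) (simp add: algebra_simps)
  finally show ?thesis
    by (simp add: sum.distrib[symmetric] algebra_simps)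
qed

lemma chebyshev_T_legendre_expansion:
  "chebyshev_T n x = (\<Sum>l\<le>n. Lcoef n l * poly (legendre_poly l) x)"
proof (induction n rule: induct_nat_012)
  case 0
  then show ?case
    by (simp add: Lcoef_0_0)
next
  case 1
  then show ?case
    by (simp add: Lcoef_above_diag Lcoef_odd Lcoef_diag Lam_1)
next
  case (ge2 n)
  let ?p = "\<lambda>l. poly (legendre_poly l) x"
  define A where "A k = Lcoef (Suc n) (k - 1) * real k / (2 * real k - 1)
      + Lcoef (Suc n) (Suc k) * (real k + 1) / (2 * real k + 3)" for k
  have "x * (\<Sum>l\<le>Suc n. Lcoef (Suc n) l * ?p l) = (\<Sum>k\<le>Suc (Suc n). A k * ?p k)"
    unfolding A_def by (rule x_mult_legendre_sum) (simp add: Lcoef_above_diag)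
  moreover have "(\<Sum>l\<le>n. Lcoef n l * ?p l) = (\<Sum>l\<le>Suc (Suc n). Lcoef n l * ?p l)"
    by (simp add: Lcoef_above_diag)
  moreover have "Lcoef (Suc (Suc n)) k = 2 * A k - Lcoef n k" for k
    using Lcoef_recurrence[of "Suc n" k] by (simp add: A_def algebra_simps)
  ultimately show ?case
    using ge2.IH by (simp add: sum_subtractf sum_distrib_left left_diff_distrib mult.assoc)
qed

section \<open>The addition theorem for spherical harmonics\<close>

text \<open>A polynomial \<open>p\<close> of degree at most \<open>N\<close> is read as the binary form
  \<open>\<Sum>i. p\<^sub>i u\<^sup>i v\<^sup>N\<^sup>-\<^sup>i\<close>, into which \<open>u := a X + c\<close> and \<open>v := b X + d\<close> are substituted.\<close>
definition homog_subst :: "'a::comm_ring_1 \<Rightarrow> 'a \<Rightarrow> 'a \<Rightarrow> 'a \<Rightarrow> nat \<Rightarrow> 'a poly \<Rightarrow> 'a poly" where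
  "homog_subst a b c d N p = (\<Sum>i\<le>N. smult (coeff p i) ([:c, a:] ^ i * [:d, b:] ^ (N - i)))"

lemma coeff_homog_subst:
  "coeff (homog_subst a b c d N p) n = (\<Sum>i\<le>N. coeff p i * coeff ([:c, a:] ^ i * [:d, b:] ^ (N - i)) n)"
  by (simp add: homog_subst_def coeff_sum)

lemma homog_subst_linear_mult:
  fixes a b c d p q :: "'a::{idom, ring_char_0}"
  assumes "degree r \<le> N"
  shows "homog_subst a b c d (Suc N) ([:q, p:] * r) = [:p * c + q * d, p * a + q * b:] * homog_subst a b c d N r"
proof -
  let ?U = "[:c, a:]" and ?V = "[:d, b:]"
  have coeff_lin_mult: "coeff ([:q, p:] * r) i = q * coeff r i + (if i = 0 then 0 else p * coeff r (i - 1))" for i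
    by (cases i) (simp_all add: coeff_pCons)
  have "homog_subst a b c d (Suc N) ([:q, p:] * r) =
      (\<Sum>i\<le>Suc N. smult (q * coeff r i) (?U ^ i * ?V ^ (Suc N - i)))
    + (\<Sum>i\<le>Suc N. smult (if i = 0 then 0 else p * coeff r (i - 1)) (?U ^ i * ?V ^ (Suc N - i)))"
    unfolding homog_subst_def coeff_lin_mult smult_add_left sum.distrib ..
  also have "(\<Sum>i\<le>Suc N. smult (q * coeff r i) (?U ^ i * ?V ^ (Suc N - i))) =
      smult q ?V * homog_subst a b c d N r"
  proof -
    have "coeff r (Suc N) = 0"
      using assms by (intro coeff_eq_0) simp
    then have "(\<Sum>i\<le>Suc N. smult (q * coeff r i) (?U ^ i * ?V ^ (Suc N - i))) =
        (\<Sum>i\<le>N. smult q ?V * smult (coeff r i) (?U ^ i * ?V ^ (N - i)))"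
      by (simp, intro sum.cong refl poly_ext) (simp add: Suc_diff_le algebra_simps)
    then show ?thesis
      by (simp add: homog_subst_def sum_distrib_left)
  qed
  also have "(\<Sum>i\<le>Suc N. smult (if i = 0 then 0 else p * coeff r (i - 1)) (?U ^ i * ?V ^ (Suc N - i))) =
      smult p ?U * homog_subst a b c d N r"
    by (subst sum.atMost_Suc_shift)
      (simp add: homog_subst_def sum_distrib_left, intro sum.cong refl poly_ext, simp add: algebra_simps)
  also have "smult q ?V * homog_subst a b c d N r + smult p ?U * homog_subst a b c d N r =
      [:p * c + q * d, p * a + q * b:] * homog_subst a b c d N r"
    by (intro poly_ext) (simp add: algebra_simps)
  finally show ?thesis .
qed

lemma homog_subst_linear_power_mult:
  fixes a b c d p q :: "'a::{idom, ring_char_0}"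
  assumes "degree r \<le> N"
  shows "homog_subst a b c d (k + N) ([:q, p:] ^ k * r) =
    [:p * c + q * d, p * a + q * b:] ^ k * homog_subst a b c d N r"
proof (induction k)
  case (Suc k)
  have "degree ([:q, p:] ^ k) \<le> k"
    by (rule order.trans[OF degree_power_le]) simp
  then have "degree ([:q, p:] ^ k * r) \<le> k + N"
    using assms by (meson add_mono degree_mult_le order.trans)
  then have "homog_subst a b c d (Suc (k + N)) ([:q, p:] * ([:q, p:] ^ k * r)) =
      [:p * c + q * d, p * a + q * b:] * homog_subst a b c d (k + N) ([:q, p:] ^ k * r)"
    by (rule homog_subst_linear_mult)
  then show ?case
    by (simp only: Suc.IH power_Suc mult.assoc add_Suc)
qed simp

lemma homog_subst_linear_powers:
  fixes a b c d a' b' c' d' :: "'a::{idom, ring_char_0}"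
  shows "homog_subst a b c d (l + l) ([:c', a':] ^ l * [:d', b':] ^ l) =
    [:a' * c + c' * d, a' * a + c' * b:] ^ l * [:b' * c + d' * d, b' * a + d' * b:] ^ l"
proof -
  have "degree ([:d', b':] ^ l) \<le> l"
    by (rule order.trans[OF degree_power_le]) simp
  then have "homog_subst a b c d (l + l) ([:c', a':] ^ l * [:d', b':] ^ l) =
      [:a' * c + c' * d, a' * a + c' * b:] ^ l * homog_subst a b c d l ([:d', b':] ^ l * 1)"
    by (simp add: homog_subst_linear_power_mult)
  also have "homog_subst a b c d l ([:d', b':] ^ l * 1) =
      [:b' * c + d' * d, b' * a + d' * b:] ^ l * homog_subst a b c d 0 1"
    using homog_subst_linear_power_mult[of 1 0 a b c d l d' b'] by simp
  finally show ?thesis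
    by (simp add: homog_subst_def)
qed

text \<open>Substitutions compose like \<open>2 \<times> 2\<close> matrices; this is the matrix product, read off at the
  coefficient of \<open>X\<^sup>n\<close>.\<close>
lemma coeff_linear_powers_composition:
  fixes a b c d a' b' c' d' :: "'a::{idom, ring_char_0}"
  shows "coeff ([:a' * c + c' * d, a' * a + c' * b:] ^ l * [:b' * c + d' * d, b' * a + d' * b:] ^ l) n =
    (\<Sum>j\<le>l + l. coeff ([:c', a':] ^ l * [:d', b':] ^ l) j * coeff ([:c, a:] ^ j * [:d, b:] ^ (l + l - j)) n)"
  using arg_cong[OF homog_subst_linear_powers[of a b c d l c' a' d' b'], of "\<lambda>p. coeff p n"]
  by (simp add: coeff_homog_subst)

text \<open>The coefficients of the binary form \<open>u\<^sup>l v\<^sup>l\<close> after the rotation with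
  \<open>s = sin (\<theta>/2)\<close>, \<open>c = cos (\<theta>/2)\<close>; up to normalisation these are the Wigner matrix
  entries \<open>d\<^sup>l\<^sub>j\<^sub>-\<^sub>l\<^sub>,\<^sub>0(\<theta>)\<close>.\<close>
definition wigner_coeff :: "nat \<Rightarrow> nat \<Rightarrow> 'a::comm_ring_1 \<Rightarrow> 'a \<Rightarrow> 'a" where
  "wigner_coeff l j s c = coeff ([:-s, c:] ^ l * [:c, s:] ^ l) j"

lemma wigner_coeff_sum:
  "wigner_coeff l j s c = (\<Sum>i\<le>j. of_nat (l choose i) * c ^ i * (-s) ^ (l - i) *
      (of_nat (l choose (j - i)) * s ^ (j - i) * c ^ (l - (j - i))))"
  by (simp add: wigner_coeff_def coeff_linear_powers_mult)

lemma of_real_wigner_coeff: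
  "of_real (wigner_coeff l j s c) = (wigner_coeff l j (of_real s) (of_real c) :: 'a::{real_algebra_1, comm_ring_1})"
  by (simp add: wigner_coeff_sum)

lemma half_angle_monomial:
  fixes s c :: "'a::comm_ring_1"
  assumes "i \<le> l" "j - i \<le> l" "l \<le> j"
  shows "(2 * s * c) ^ (j - l) * ((- 2 * s\<^sup>2) ^ (l - i) * (2 * c\<^sup>2) ^ (l - (j - i))) =
    2 ^ l * (c ^ i * (-s) ^ (l - i) * s ^ (j - i) * c ^ (l - (j - i)))"
proof -
  define m a b where "m = j - l" and "a = l - i" and "b = l - (j - i)"
  have "j - l = m" "l - i = a" "l - (j - i) = b" "l = m + a + b" "i = m + b" "j - i = m + a"
    using assms unfolding m_def a_def b_def by arith+
  moreover have "- 2 * s\<^sup>2 = (-s) * s * 2" and "2 * c\<^sup>2 = 2 * c * c"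
    by (simp_all add: power2_eq_square)
  ultimately show ?thesis
    by (simp only: power_add power_mult_distrib) (simp only: mult_ac)
qed

lemma coeff_half_angle_wigner_coeff:
  fixes s c :: real
  assumes "s\<^sup>2 + c\<^sup>2 = 1" "l \<le> j"
  shows "(2 * s * c) ^ (j - l) * coeff ([:c\<^sup>2 - s\<^sup>2 - 1, 1:] ^ l * [:c\<^sup>2 - s\<^sup>2 + 1, 1:] ^ l) j =
    2 ^ l * wigner_coeff l j s c"
proof -
  have x: "c\<^sup>2 - s\<^sup>2 - 1 = - 2 * s\<^sup>2" "c\<^sup>2 - s\<^sup>2 + 1 = 2 * c\<^sup>2"
    using assms(1) by algebra+
  have "(2 * s * c) ^ (j - l) * coeff ([:c\<^sup>2 - s\<^sup>2 - 1, 1:] ^ l * [:c\<^sup>2 - s\<^sup>2 + 1, 1:] ^ l) j =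
      (\<Sum>i\<le>j. (2 * s * c) ^ (j - l) * (of_nat (l choose i) * of_nat (l choose (j - i)) *
        ((- 2 * s\<^sup>2) ^ (l - i) * (2 * c\<^sup>2) ^ (l - (j - i)))))"
    unfolding coeff_linear_powers_mult sum_distrib_left x by (simp add: mult_ac)
  also have "\<dots> = (\<Sum>i\<le>j. 2 ^ l * (of_nat (l choose i) * c ^ i * (-s) ^ (l - i) *
        (of_nat (l choose (j - i)) * s ^ (j - i) * c ^ (l - (j - i)))))"
  proof (intro sum.cong refl)
    fix i
    show "(2 * s * c) ^ (j - l) * (of_nat (l choose i) * of_nat (l choose (j - i)) *
        ((- 2 * s\<^sup>2) ^ (l - i) * (2 * c\<^sup>2) ^ (l - (j - i)))) =
      2 ^ l * (of_nat (l choose i) * c ^ i * (-s) ^ (l - i) *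
        (of_nat (l choose (j - i)) * s ^ (j - i) * c ^ (l - (j - i))))"
    proof (cases "i \<le> l \<and> j - i \<le> l")
      case True
      then show ?thesis
        using half_angle_monomial[of i l j s c] assms(2) by (simp add: mult_ac)
    qed (auto simp: binomial_eq_0)
  qed
  also have "\<dots> = 2 ^ l * wigner_coeff l j s c"
    by (simp only: wigner_coeff_sum sum_distrib_left)
  finally show ?thesis .
qed

lemma assoc_legendre_wigner_coeff:
  fixes s c :: real
  assumes "s \<ge> 0" "c \<ge> 0" "s\<^sup>2 + c\<^sup>2 = 1" "l \<le> j"
  shows "assoc_legendre l (j - l) (c\<^sup>2 - s\<^sup>2) = (-1) ^ (j - l) * (fact j / fact l) * wigner_coeff l j s c"
proof -
  have "1 - (c\<^sup>2 - s\<^sup>2)\<^sup>2 = (s\<^sup>2 + c\<^sup>2)\<^sup>2 - (c\<^sup>2 - s\<^sup>2)\<^sup>2"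
    by (simp add: assms(3))
  also have "\<dots> = (2 * s * c)\<^sup>2"
    by (simp add: power2_eq_square algebra_simps)
  finally have "sqrt (1 - (c\<^sup>2 - s\<^sup>2)\<^sup>2) = 2 * s * c"
    using assms(1,2) by simp
  then have "assoc_legendre l (j - l) (c\<^sup>2 - s\<^sup>2) = (-1) ^ (j - l) * (fact j / (2 ^ l * fact l)) *
      ((2 * s * c) ^ (j - l) * coeff ([:c\<^sup>2 - s\<^sup>2 - 1, 1:] ^ l * [:c\<^sup>2 - s\<^sup>2 + 1, 1:] ^ l) j)"
    unfolding assoc_legendre_def poly_higher_pderiv_legendre_poly using assms(4) by simp
  then show ?thesis
    unfolding coeff_half_angle_wigner_coeff[OF assms(3,4)] by simp
qed

lemma binomial_mult_binomial_reflect: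
  assumes "i \<le> l" "i \<le> j" "j - i \<le> l" "j \<le> l + l"
  shows "(of_nat (j choose i) * of_nat ((l + l - j) choose (l - i)) :: 'a::field_char_0) =
     fact j * fact (l + l - j) / (fact l)\<^sup>2 * (of_nat (l choose i) * of_nat (l choose (j - i)))"
proof -
  have "l + l - j - (l - i) = l - (j - i)" "l - i \<le> l + l - j"
    using assms by arith+
  then show ?thesis
    using assms by (simp add: binomial_fact field_simps power2_eq_square)
qed

lemma coeff_rotated_power_wigner_coeff:
  fixes s c :: "'a::field_char_0"
  assumes "j \<le> l + l"
  shows "coeff ([:s, c:] ^ j * [:c, -s:] ^ (l + l - j)) l =
    fact j * fact (l + l - j) / (fact l)\<^sup>2 * wigner_coeff l j s c"
proof -
  define K :: 'a where "K = fact j * fact (l + l - j) / (fact l)\<^sup>2"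
  define f where "f i = of_nat (j choose i) * c ^ i * s ^ (j - i) *
      (of_nat ((l + l - j) choose (l - i)) * (-s) ^ (l - i) * c ^ (l + l - j - (l - i)))" for i
  define g where "g i = of_nat (l choose i) * c ^ i * (-s) ^ (l - i) *
      (of_nat (l choose (j - i)) * s ^ (j - i) * c ^ (l - (j - i)))" for i
  have "coeff ([:s, c:] ^ j * [:c, -s:] ^ (l + l - j)) l = (\<Sum>i\<le>min l j. f i)"
    by (simp add: coeff_linear_powers_mult f_def, rule sum.mono_neutral_right)
      (auto simp: binomial_eq_0)
  moreover have "wigner_coeff l j s c = (\<Sum>i\<le>min l j. g i)"
    by (simp add: wigner_coeff_sum g_def, rule sum.mono_neutral_right) (auto simp: binomial_eq_0)
  moreover have "f i = K * g i" if "i \<le> min l j" for i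
  proof (cases "j - i \<le> l")
    case True
    then have "l + l - j - (l - i) = l - (j - i)"
      using that assms by arith
    then have "f i = (of_nat (j choose i) * of_nat ((l + l - j) choose (l - i))) *
        (c ^ i * (-s) ^ (l - i) * s ^ (j - i) * c ^ (l - (j - i)))"
      unfolding f_def by (simp add: mult_ac)
    also have "\<dots> = K * (of_nat (l choose i) * of_nat (l choose (j - i))) *
        (c ^ i * (-s) ^ (l - i) * s ^ (j - i) * c ^ (l - (j - i)))"
      unfolding K_def using that True assms by (subst binomial_mult_binomial_reflect) auto
    also have "\<dots> = K * g i"
      unfolding g_def by (simp add: mult_ac)
    finally show ?thesis .
  next
    case False
    then have "l - i > l + l - j"
      using that assms by arith
    then show ?thesis
      using False by (simp add: f_def g_def binomial_eq_0)
  qed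
  ultimately show ?thesis
    by (simp add: K_def[symmetric] sum_distrib_left)
qed

lemma coeff_homog_subst_swap:
  fixes p :: "'a::{idom, ring_char_0} poly"
  assumes "n \<le> N"
  shows "coeff (homog_subst 0 1 1 0 N p) n = coeff p (N - n)"
proof -
  have "[:1, 0:] ^ i * [:0, 1:] ^ (N - i) = (monom 1 (N - i) :: 'a poly)" for i
    by (simp add: monom_altdef one_pCons[symmetric])
  moreover have "(N - i = n) = (i = N - n)" if "i \<le> N" for i
    using that assms by arith
  ultimately show ?thesis
    by (simp add: coeff_homog_subst coeff_monom if_distrib cong: if_cong)
qed

lemma wigner_coeff_reflect:
  fixes s c :: "'a::{idom, ring_char_0}"
  assumes "j \<le> l + l"
  shows "wigner_coeff l (l + l - j) s c = (-1) ^ (l + j) * wigner_coeff l j s c"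
proof -
  have "homog_subst 0 1 1 0 (l + l) ([:-s, c:] ^ l * [:c, s:] ^ l) = [:c, -s:] ^ l * [:s, c:] ^ l"
    using homog_subst_linear_powers[of 0 1 1 0 l "-s" c c s] by simp
  then have "wigner_coeff l (l + l - j) s c = coeff ([:c, -s:] ^ l * [:s, c:] ^ l) j"
    using coeff_homog_subst_swap[OF assms, of "[:-s, c:] ^ l * [:c, s:] ^ l"] by (simp add: wigner_coeff_def)
  also have "\<dots> = (\<Sum>i\<le>j. of_nat (l choose i) * c ^ i * s ^ (l - i) *
      (of_nat (l choose (j - i)) * (-s) ^ (j - i) * c ^ (l - (j - i))))"
    by (simp only: mult.commute[of "[:c, -s:] ^ l"] coeff_linear_powers_mult)
  also have "\<dots> = (\<Sum>i\<le>j. (-1) ^ (l + j) * (of_nat (l choose i) * c ^ i * (-s) ^ (l - i) *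
      (of_nat (l choose (j - i)) * s ^ (j - i) * c ^ (l - (j - i)))))"
  proof (intro sum.cong refl)
    fix i
    assume "i \<in> {..j}"
    show "of_nat (l choose i) * c ^ i * s ^ (l - i) * (of_nat (l choose (j - i)) * (-s) ^ (j - i) * c ^ (l - (j - i))) =
      (-1) ^ (l + j) * (of_nat (l choose i) * c ^ i * (-s) ^ (l - i) *
        (of_nat (l choose (j - i)) * s ^ (j - i) * c ^ (l - (j - i))))"
    proof (cases "i \<le> l")
      case True
      with \<open>i \<in> {..j}\<close> have "l + j + (l - i) = (j - i) + 2 * l"
        by simp
      then have "(-1::'a) ^ (l + j) * (-1) ^ (l - i) = (-1) ^ (j - i)"
        by (simp only: power_add[symmetric]) (simp add: power_add power_mult)
      then show ?thesis
        by (simp add: power_minus[of s] mult_ac)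
    qed (simp add: binomial_eq_0)
  qed
  also have "\<dots> = (-1) ^ (l + j) * wigner_coeff l j s c"
    by (simp only: wigner_coeff_sum sum_distrib_left)
  finally show ?thesis .
qed

lemma coeff_phase_rotated_wigner_coeff:
  fixes s c w w' :: "'a::comm_ring_1"
  assumes "w * w' = 1"
  shows "coeff ([:-(s * w'), c:] ^ l * [:c, s * w:] ^ l) j = w ^ j * w' ^ l * wigner_coeff l j s c"
proof -
  have "coeff ([:-(s * w'), c:] ^ l * [:c, s * w:] ^ l) j =
      (\<Sum>i\<le>j. of_nat (l choose i) * c ^ i * (-(s * w')) ^ (l - i) *
        (of_nat (l choose (j - i)) * (s * w) ^ (j - i) * c ^ (l - (j - i))))"
    by (simp only: coeff_linear_powers_mult)
  also have "\<dots> = (\<Sum>i\<le>j. w ^ j * w' ^ l * (of_nat (l choose i) * c ^ i * (-s) ^ (l - i) *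
        (of_nat (l choose (j - i)) * s ^ (j - i) * c ^ (l - (j - i)))))"
  proof (intro sum.cong refl)
    fix i
    assume "i \<in> {..j}"
    show "of_nat (l choose i) * c ^ i * (-(s * w')) ^ (l - i) *
        (of_nat (l choose (j - i)) * (s * w) ^ (j - i) * c ^ (l - (j - i))) =
      w ^ j * w' ^ l * (of_nat (l choose i) * c ^ i * (-s) ^ (l - i) *
        (of_nat (l choose (j - i)) * s ^ (j - i) * c ^ (l - (j - i))))"
    proof (cases "i \<le> l")
      case True
      have "w ^ j = w ^ (j - i) * w ^ i" "w' ^ l = w' ^ (l - i) * w' ^ i"
        using True \<open>i \<in> {..j}\<close> by (simp_all flip: power_add)
      then have "w ^ j * w' ^ l = w ^ (j - i) * w' ^ (l - i) * (w * w') ^ i"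
        by (simp add: power_mult_distrib mult_ac)
      then have "w ^ j * w' ^ l = w ^ (j - i) * w' ^ (l - i)"
        using assms by simp
      moreover have "(-(s * w')) ^ (l - i) = (-s) ^ (l - i) * w' ^ (l - i)"
        by (simp only: minus_mult_left power_mult_distrib)
      ultimately show ?thesis
        by (simp add: power_mult_distrib mult_ac)
    qed (simp add: binomial_eq_0)
  qed
  also have "\<dots> = w ^ j * w' ^ l * wigner_coeff l j s c"
    by (simp only: wigner_coeff_sum sum_distrib_left)
  finally show ?thesis .
qed

lemma coeff_linear_powers_legendre_poly:
  fixes A B C D :: "'a::{real_algebra_1, comm_ring_1}"
  assumes "A * D = of_real ((1 + y) / 2)" and "B * C = of_real ((y - 1) / 2)"
  shows "coeff ([:C, A:] ^ l * [:D, B:] ^ l) l = of_real (poly (legendre_poly l) y)"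
proof -
  have "poly (legendre_poly l) y = fact l / (2 ^ l * fact l) * coeff ([:y - 1, 1:] ^ l * [:y + 1, 1:] ^ l) l"
    using poly_higher_pderiv_legendre_poly[of 0 l y] by simp
  also have "\<dots> = (\<Sum>i\<le>l. of_nat (l choose i) * of_nat (l choose (l - i)) *
      (((y - 1) / 2) ^ (l - i) * ((y + 1) / 2) ^ i))"
    unfolding coeff_linear_powers_mult sum_distrib_left
  proof (intro sum.cong refl)
    fix i
    assume "i \<in> {..l}"
    then have "(2::real) ^ l = 2 ^ (l - i) * 2 ^ i"
      by (simp add: power_add[symmetric])
    then show "fact l / (2 ^ l * fact l) * (of_nat (l choose i) * 1 ^ i * (y - 1) ^ (l - i) *
        (of_nat (l choose (l - i)) * 1 ^ (l - i) * (y + 1) ^ (l - (l - i)))) =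
      of_nat (l choose i) * of_nat (l choose (l - i)) * (((y - 1) / 2) ^ (l - i) * ((y + 1) / 2) ^ i)"
      using \<open>i \<in> {..l}\<close> by (simp add: power_divide)
  qed
  finally have "of_real (poly (legendre_poly l) y) = (\<Sum>i\<le>l. of_nat (l choose i) * of_nat (l choose (l - i)) *
      ((B * C) ^ (l - i) * (A * D) ^ i) :: 'a)"
    unfolding assms by (simp add: add.commute)
  moreover have "coeff ([:C, A:] ^ l * [:D, B:] ^ l) l =
      (\<Sum>i\<le>l. of_nat (l choose i) * of_nat (l choose (l - i)) * ((B * C) ^ (l - i) * (A * D) ^ i))"
    unfolding coeff_linear_powers_mult by (intro sum.cong refl) (auto simp: power_mult_distrib mult_ac)
  ultimately show ?thesis
    by simp
qed

lemma half_angle_composite_products: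
  fixes s c s' c' t :: real
  assumes "s\<^sup>2 + c\<^sup>2 = 1" "s'\<^sup>2 + c'\<^sup>2 = 1"
  defines "y \<equiv> (c\<^sup>2 - s\<^sup>2) * (c'\<^sup>2 - s'\<^sup>2) + 4 * s * c * s' * c' * cos t"
  shows "(of_real c * of_real c' + -(of_real s * cis (-t)) * - of_real s') *
      (of_real s * cis t * of_real s' + of_real c * of_real c') = complex_of_real ((1 + y) / 2)"
    and "(of_real s * cis t * of_real c' + of_real c * - of_real s') *
      (of_real c * of_real s' + -(of_real s * cis (-t)) * of_real c') = complex_of_real ((y - 1) / 2)"
proof -
  have cis_mult_cis: "cis t * cis (-t) = 1"
    by (simp add: cis_mult)
  have cis_plus_cis: "cis t + cis (-t) = complex_of_real (2 * cos t)"
    by (simp add: complex_eq_iff)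
  have "(of_real c * of_real c' + -(of_real s * cis (-t)) * - of_real s') *
      (of_real s * cis t * of_real s' + of_real c * of_real c') =
    complex_of_real (c\<^sup>2 * c'\<^sup>2 + s\<^sup>2 * s'\<^sup>2) + complex_of_real (s * c * s' * c') * (cis t + cis (-t))
      + complex_of_real (s\<^sup>2 * s'\<^sup>2) * (cis t * cis (-t) - 1)"
    by (simp add: algebra_simps power2_eq_square)
  also have "\<dots> = complex_of_real (c\<^sup>2 * c'\<^sup>2 + s\<^sup>2 * s'\<^sup>2 + 2 * s * c * s' * c' * cos t)"
    unfolding cis_mult_cis cis_plus_cis by simp
  also have "c\<^sup>2 * c'\<^sup>2 + s\<^sup>2 * s'\<^sup>2 + 2 * s * c * s' * c' * cos t = (1 + y) / 2"
  proof -
    have "2 * (c\<^sup>2 * c'\<^sup>2 + s\<^sup>2 * s'\<^sup>2 + 2 * s * c * s' * c' * cos t) = 1 + y"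
      using assms unfolding y_def by algebra
    then show ?thesis
      by (simp add: field_simps)
  qed
  finally show "(of_real c * of_real c' + -(of_real s * cis (-t)) * - of_real s') *
      (of_real s * cis t * of_real s' + of_real c * of_real c') = complex_of_real ((1 + y) / 2)" .
  have "(of_real s * cis t * of_real c' + of_real c * - of_real s') *
      (of_real c * of_real s' + -(of_real s * cis (-t)) * of_real c') =
    complex_of_real (s * c * s' * c') * (cis t + cis (-t)) - complex_of_real (s\<^sup>2 * c'\<^sup>2 + c\<^sup>2 * s'\<^sup>2)
      - complex_of_real (s\<^sup>2 * c'\<^sup>2) * (cis t * cis (-t) - 1)"
    by (simp add: algebra_simps power2_eq_square)
  also have "\<dots> = complex_of_real (2 * s * c * s' * c' * cos t - s\<^sup>2 * c'\<^sup>2 - c\<^sup>2 * s'\<^sup>2)"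
    unfolding cis_mult_cis cis_plus_cis by simp
  also have "2 * s * c * s' * c' * cos t - s\<^sup>2 * c'\<^sup>2 - c\<^sup>2 * s'\<^sup>2 = (y - 1) / 2"
  proof -
    have "2 * (2 * s * c * s' * c' * cos t - s\<^sup>2 * c'\<^sup>2 - c\<^sup>2 * s'\<^sup>2) = y - 1"
      using assms unfolding y_def by algebra
    then show ?thesis
      by (simp add: field_simps)
  qed
  finally show "(of_real s * cis t * of_real c' + of_real c * - of_real s') *
      (of_real c * of_real s' + -(of_real s * cis (-t)) * of_real c') = complex_of_real ((y - 1) / 2)" .
qed

text \<open>Substituting successively with the data of the two points, the middle coefficient of
  \<open>u\<^sup>l v\<^sup>l\<close> is \<open>P\<^sub>l\<close> at the cosine of their angle (\<open>coeff_linear_powers_legendre_poly\<close>);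
  multiplying out the composite substitution instead gives the sum.\<close>
theorem legendre_poly_addition_half_angle:
  fixes s c s' c' t :: real
  assumes "s\<^sup>2 + c\<^sup>2 = 1" "s'\<^sup>2 + c'\<^sup>2 = 1"
  shows "complex_of_real (poly (legendre_poly l) ((c\<^sup>2 - s\<^sup>2) * (c'\<^sup>2 - s'\<^sup>2) + 4 * s * c * s' * c' * cos t)) =
    (\<Sum>j\<le>l + l. complex_of_real (fact j * fact (l + l - j) / (fact l)\<^sup>2 *
        (wigner_coeff l j s c * wigner_coeff l j s' c')) * cis ((real j - real l) * t))"
proof -
  let ?s = "complex_of_real s" and ?c = "complex_of_real c"
    and ?s' = "complex_of_real s'" and ?c' = "complex_of_real c'"
  have "complex_of_real (poly (legendre_poly l) ((c\<^sup>2 - s\<^sup>2) * (c'\<^sup>2 - s'\<^sup>2) + 4 * s * c * s' * c' * cos t)) =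
      (\<Sum>j\<le>l + l. coeff ([:-(?s * cis (-t)), ?c:] ^ l * [:?c, ?s * cis t:] ^ l) j *
        coeff ([:?s', ?c':] ^ j * [:?c', - ?s':] ^ (l + l - j)) l)"
    using coeff_linear_powers_legendre_poly[OF half_angle_composite_products[OF assms, of t], of l]
      coeff_linear_powers_composition[where a = ?c' and b = "- ?s'" and c = ?s' and d = ?c'
        and a' = ?c and b' = "?s * cis t" and c' = "-(?s * cis (-t))" and d' = ?c and l = l and n = l]
    by simp
  also have "\<dots> = (\<Sum>j\<le>l + l. complex_of_real (fact j * fact (l + l - j) / (fact l)\<^sup>2 *
        (wigner_coeff l j s c * wigner_coeff l j s' c')) * cis ((real j - real l) * t))"
  proof (intro sum.cong refl)
    fix j
    assume "j \<in> {..l + l}"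
    have "cis t * cis (-t) = 1" "cis t ^ j * cis (-t) ^ l = cis ((real j - real l) * t)"
      by (simp_all only: Complex.DeMoivre cis_mult) (simp_all add: algebra_simps)
    then show "coeff ([:-(?s * cis (-t)), ?c:] ^ l * [:?c, ?s * cis t:] ^ l) j *
        coeff ([:?s', ?c':] ^ j * [:?c', - ?s':] ^ (l + l - j)) l =
      complex_of_real (fact j * fact (l + l - j) / (fact l)\<^sup>2 *
        (wigner_coeff l j s c * wigner_coeff l j s' c')) * cis ((real j - real l) * t)"
      using \<open>j \<in> {..l + l}\<close>
      by (simp only: coeff_phase_rotated_wigner_coeff coeff_rotated_power_wigner_coeff atMost_iff)
        (simp add: of_real_wigner_coeff mult_ac)
  qed
  finally show ?thesis .
qed

lemma assoc_legendre_mult_wigner_coeff: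
  fixes s c s' c' :: real
  assumes "s \<ge> 0" "c \<ge> 0" "s\<^sup>2 + c\<^sup>2 = 1" "s' \<ge> 0" "c' \<ge> 0" "s'\<^sup>2 + c'\<^sup>2 = 1"
    and "j \<le> l + l"
  shows "fact (l - nat \<bar>int j - int l\<bar>) / fact (l + nat \<bar>int j - int l\<bar>) *
      assoc_legendre l (nat \<bar>int j - int l\<bar>) (c\<^sup>2 - s\<^sup>2) *
      assoc_legendre l (nat \<bar>int j - int l\<bar>) (c'\<^sup>2 - s'\<^sup>2) =
    fact j * fact (l + l - j) / (fact l)\<^sup>2 * (wigner_coeff l j s c * wigner_coeff l j s' c')"
proof (cases "l \<le> j")
  case True
  then have m: "nat \<bar>int j - int l\<bar> = j - l" "l - (j - l) = l + l - j" "l + (j - l) = j"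
    by simp_all
  have AL: "assoc_legendre l (j - l) (c\<^sup>2 - s\<^sup>2) = (-1) ^ (j - l) * (fact j / fact l) * wigner_coeff l j s c"
    "assoc_legendre l (j - l) (c'\<^sup>2 - s'\<^sup>2) = (-1) ^ (j - l) * (fact j / fact l) * wigner_coeff l j s' c'"
    using True assms by (simp_all add: assoc_legendre_wigner_coeff)
  have "(-1::real) ^ (j - l) * (-1) ^ (j - l) = 1"
    by (simp flip: power_add add: power_mult[symmetric] mult_2[symmetric])
  then show ?thesis
    unfolding m AL by (simp add: field_simps power2_eq_square)
next
  case False
  then have m: "nat \<bar>int j - int l\<bar> = l + l - j - l" "l - (l + l - j - l) = j" "l + (l + l - j - l) = l + l - j"
    by simp_all
  have "l \<le> l + l - j"
    using False by simp
  then have AL: "assoc_legendre l (l + l - j - l) (c\<^sup>2 - s\<^sup>2) =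
      (-1) ^ (l + l - j - l) * (fact (l + l - j) / fact l) * ((-1) ^ (l + j) * wigner_coeff l j s c)"
    "assoc_legendre l (l + l - j - l) (c'\<^sup>2 - s'\<^sup>2) =
      (-1) ^ (l + l - j - l) * (fact (l + l - j) / fact l) * ((-1) ^ (l + j) * wigner_coeff l j s' c')"
    using assms by (simp_all only: assoc_legendre_wigner_coeff wigner_coeff_reflect)
  have "((-1::real) ^ (l + l - j - l) * (-1) ^ (l + j)) * ((-1) ^ (l + l - j - l) * (-1) ^ (l + j)) = 1"
    by (simp flip: power_add add: power_mult[symmetric] mult_2[symmetric] mult_ac)
  then show ?thesis
    unfolding m AL by (simp add: field_simps power2_eq_square)
qed

lemma sum_symmetric_int_interval:
  "(\<Sum>m = - int l..int l. f m) = (\<Sum>j\<le>l + l. f (int j - int l))"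
  by (rule sum.reindex_bij_witness[where i = "\<lambda>j. int j - int l" and j = "\<lambda>m. nat (m + int l)"])
    (auto simp: nat_le_iff)

lemma half_angle_sqrt:
  fixes x :: real
  assumes "\<bar>x\<bar> \<le> 1"
  defines "s \<equiv> sqrt ((1 - x) / 2)" and "c \<equiv> sqrt ((1 + x) / 2)"
  shows "s \<ge> 0" "c \<ge> 0" "s\<^sup>2 + c\<^sup>2 = 1" "c\<^sup>2 - s\<^sup>2 = x" "2 * s * c = sqrt (1 - x\<^sup>2)"
proof -
  have "s\<^sup>2 = (1 - x) / 2" "c\<^sup>2 = (1 + x) / 2"
    using assms by (simp_all add: s_def c_def abs_le_iff)
  then show "s\<^sup>2 + c\<^sup>2 = 1" "c\<^sup>2 - s\<^sup>2 = x"
    by simp_all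
  show "s \<ge> 0" "c \<ge> 0"
    using assms by (simp_all add: s_def c_def abs_le_iff)
  have "sqrt (1 - x\<^sup>2) = sqrt (1 - x) * sqrt (1 + x)"
    by (simp add: power2_eq_square algebra_simps flip: real_sqrt_mult)
  then show "2 * s * c = sqrt (1 - x\<^sup>2)"
    by (simp add: s_def c_def real_sqrt_divide)
qed

lemma sph_harm_mult_cnj:
  "sph_harm l m \<theta> \<phi> * cnj (sph_harm l m \<theta>' \<phi>') =
    complex_of_real ((2 * real l + 1) / (4 * pi) * (fact (l - nat \<bar>m\<bar>) / fact (l + nat \<bar>m\<bar>) *
      assoc_legendre l (nat \<bar>m\<bar>) (cos \<theta>) * assoc_legendre l (nat \<bar>m\<bar>) (cos \<theta>'))) *
    cis (of_int m * (\<phi> - \<phi>'))"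
proof -
  define a where "a = (2 * real l + 1) / (4 * pi) * fact (l - nat \<bar>m\<bar>) / fact (l + nat \<bar>m\<bar>)"
  have "a \<ge> 0"
    by (simp add: a_def)
  then have "sqrt a * sqrt a = a"
    by simp
  moreover have "exp (\<i> * of_int m * of_real \<phi>) * cnj (exp (\<i> * of_int m * of_real \<phi>')) =
      cis (of_int m * (\<phi> - \<phi>'))"
    by (simp add: exp_cnj cis_conv_exp algebra_simps flip: exp_add)
  ultimately show ?thesis
    unfolding sph_harm_def a_def[symmetric]
    by (simp add: a_def mult_ac flip: of_real_mult)
qed

theorem spherical_harmonics_addition:
  "(\<Sum>m = - int l..int l. sph_harm l m \<theta> \<phi> * cnj (sph_harm l m \<theta>' \<phi>')) =
    complex_of_real ((2 * real l + 1) / (4 * pi) * poly (legendre_poly l)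
      (cos \<theta> * cos \<theta>' + sqrt (1 - (cos \<theta>)\<^sup>2) * sqrt (1 - (cos \<theta>')\<^sup>2) * cos (\<phi> - \<phi>')))"
proof -
  define s c s' c' where "s = sqrt ((1 - cos \<theta>) / 2)" and "c = sqrt ((1 + cos \<theta>) / 2)"
    and "s' = sqrt ((1 - cos \<theta>') / 2)" and "c' = sqrt ((1 + cos \<theta>') / 2)"
  note half = half_angle_sqrt[OF abs_cos_le_one[of \<theta>], folded s_def c_def]
    half_angle_sqrt[OF abs_cos_le_one[of \<theta>'], folded s'_def c'_def]
  have "(\<Sum>m = - int l..int l. sph_harm l m \<theta> \<phi> * cnj (sph_harm l m \<theta>' \<phi>')) =
      complex_of_real ((2 * real l + 1) / (4 * pi)) *
      (\<Sum>j\<le>l + l. complex_of_real (fact j * fact (l + l - j) / (fact l)\<^sup>2 *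
        (wigner_coeff l j s c * wigner_coeff l j s' c')) * cis ((real j - real l) * (\<phi> - \<phi>')))"
    unfolding sum_symmetric_int_interval sph_harm_mult_cnj sum_distrib_left
    using assoc_legendre_mult_wigner_coeff[OF half(1-3) half(6-8)] unfolding half(4,9)
    by (intro sum.cong refl) (simp only: atMost_iff of_real_mult, simp)
  also have "\<dots> = complex_of_real ((2 * real l + 1) / (4 * pi) * poly (legendre_poly l)
      (cos \<theta> * cos \<theta>' + sqrt (1 - (cos \<theta>)\<^sup>2) * sqrt (1 - (cos \<theta>')\<^sup>2) * cos (\<phi> - \<phi>')))"
    using legendre_poly_addition_half_angle[of s c s' c' l "\<phi> - \<phi>'"] half
    by (simp add: mult_ac flip: half(5) half(10))
  finally show ?thesis .
qed

section \<open>Spherical coordinates and the logarithmic kernel\<close>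

lemma sph_phi_polar:
  fixes x :: "real ^ 3"
  shows "sqrt ((x $ 1)\<^sup>2 + (x $ 2)\<^sup>2) * cos (sph_phi x) = x $ 1"
    and "sqrt ((x $ 1)\<^sup>2 + (x $ 2)\<^sup>2) * sin (sph_phi x) = x $ 2"
proof -
  define z where "z = Complex (x $ 1) (x $ 2)"
  have "cos (sph_phi x) = cos (Arg z)" "sin (sph_phi x) = sin (Arg z)"
    by (simp_all add: sph_phi_def Let_def z_def)
  moreover have "cmod z = sqrt ((x $ 1)\<^sup>2 + (x $ 2)\<^sup>2)"
    by (simp add: z_def complex_norm)
  ultimately show "sqrt ((x $ 1)\<^sup>2 + (x $ 2)\<^sup>2) * cos (sph_phi x) = x $ 1"
    and "sqrt ((x $ 1)\<^sup>2 + (x $ 2)\<^sup>2) * sin (sph_phi x) = x $ 2"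
    using cos_Arg[of z] sin_Arg[of z] by (cases "z = 0"; simp add: z_def complex_eq_iff)+
qed

lemma cos_sph_theta:
  fixes x :: "real ^ 3"
  assumes "x \<noteq> 0"
  shows "cos (sph_theta x) = x $ 3 / norm x"
proof -
  have "\<bar>x $ 3\<bar> \<le> norm x"
    by (rule component_le_norm_cart)
  then show ?thesis
    using assms by (simp add: sph_theta_def abs_le_iff divide_simps)
qed

lemma sqrt_one_minus_cos_sph_theta:
  fixes x :: "real ^ 3"
  assumes "x \<noteq> 0"
  shows "sqrt (1 - (cos (sph_theta x))\<^sup>2) = sqrt ((x $ 1)\<^sup>2 + (x $ 2)\<^sup>2) / norm x"
proof -
  have "(norm x)\<^sup>2 = (x $ 1)\<^sup>2 + (x $ 2)\<^sup>2 + (x $ 3)\<^sup>2"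
    unfolding power2_norm_eq_inner inner_vec_def sum_3 by (simp add: power2_eq_square)
  moreover have "1 - (cos (sph_theta x))\<^sup>2 = ((norm x)\<^sup>2 - (x $ 3)\<^sup>2) / (norm x)\<^sup>2"
    using assms by (simp add: cos_sph_theta field_simps power_divide)
  ultimately have "1 - (cos (sph_theta x))\<^sup>2 = ((x $ 1)\<^sup>2 + (x $ 2)\<^sup>2) / (norm x)\<^sup>2"
    by simp
  then show ?thesis
    by (simp add: real_sqrt_divide)
qed

lemma cos_angle_sph_coords:
  fixes x y :: "real ^ 3"
  assumes "x \<noteq> 0" "y \<noteq> 0"
  shows "cos (sph_theta x) * cos (sph_theta y) + sqrt (1 - (cos (sph_theta x))\<^sup>2) *
      sqrt (1 - (cos (sph_theta y))\<^sup>2) * cos (sph_phi x - sph_phi y) = (x \<bullet> y) / (norm x * norm y)"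
proof -
  let ?rx = "sqrt ((x $ 1)\<^sup>2 + (x $ 2)\<^sup>2)" and ?ry = "sqrt ((y $ 1)\<^sup>2 + (y $ 2)\<^sup>2)"
  have "?rx * ?ry * cos (sph_phi x - sph_phi y) =
      (?rx * cos (sph_phi x)) * (?ry * cos (sph_phi y)) + (?rx * sin (sph_phi x)) * (?ry * sin (sph_phi y))"
    by (simp add: cos_diff algebra_simps)
  also have "\<dots> = x $ 1 * y $ 1 + x $ 2 * y $ 2"
    by (simp only: sph_phi_polar)
  finally have "?rx * ?ry * cos (sph_phi x - sph_phi y) = x $ 1 * y $ 1 + x $ 2 * y $ 2" .
  moreover have "x \<bullet> y = x $ 1 * y $ 1 + x $ 2 * y $ 2 + x $ 3 * y $ 3"
    by (simp add: inner_vec_def sum_3)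
  ultimately show ?thesis
    unfolding sqrt_one_minus_cos_sph_theta[OF assms(1)] sqrt_one_minus_cos_sph_theta[OF assms(2)]
    unfolding cos_sph_theta[OF assms(1)] cos_sph_theta[OF assms(2)]
    using assms by (simp add: field_simps)
qed

lemma log_cos_series:
  fixes t \<psi> :: real
  assumes "0 \<le> t" "t < 1"
  shows "(\<lambda>k. t ^ Suc k / real (Suc k) * cos (real (Suc k) * \<psi>)) sums (- ln (1 - 2 * t * cos \<psi> + t\<^sup>2) / 2)"
proof -
  define w where "w = complex_of_real t * cis \<psi>"
  have "cmod w = t"
    using assms by (simp add: w_def norm_mult)
  then have "(\<lambda>n. - (w ^ n) / of_nat n) sums Ln (1 - w)"
    using Ln_series'[of "- w"] assms by simp
  then have "(\<lambda>n. Re (w ^ n / of_nat n)) sums - Re (Ln (1 - w))"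
    using sums_minus sums_Re by fastforce
  moreover have "(\<lambda>n. Re (w ^ n / of_nat n)) = (\<lambda>n. t ^ n / real n * cos (real n * \<psi>))"
    by (simp add: w_def power_mult_distrib Complex.DeMoivre Re_divide_of_nat)
  moreover have "(cmod (1 - w))\<^sup>2 = 1 - 2 * t * cos \<psi> + t\<^sup>2"
  proof -
    have "(cmod (1 - w))\<^sup>2 = (1 - t * cos \<psi>)\<^sup>2 + (t * sin \<psi>)\<^sup>2"
      by (simp add: w_def cmod_power2)
    also have "\<dots> = 1 - 2 * t * cos \<psi> + t\<^sup>2"
      by (simp add: power_mult_distrib sin_squared_eq power2_diff algebra_simps)
    finally show ?thesis .
  qed
  moreover have "1 - w \<noteq> 0"
    using \<open>cmod w = t\<close> assms by auto
  then have "Re (Ln (1 - w)) = ln ((cmod (1 - w))\<^sup>2) / 2"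
    by (simp add: ln_realpow)
  ultimately have "(\<lambda>n. t ^ n / real n * cos (real n * \<psi>)) sums (- ln (1 - 2 * t * cos \<psi> + t\<^sup>2) / 2)"
    by simp
  then show ?thesis
    using sums_Suc_iff[of "\<lambda>n. t ^ n / real n * cos (real n * \<psi>)"] by simp
qed

lemma ln_norm_diff:
  fixes x y :: "'a::real_inner"
  assumes "norm y < norm x"
  shows "ln (norm x) - ln (norm (x - y)) =
    - ln (1 - 2 * (norm y / norm x) * ((x \<bullet> y) / (norm x * norm y)) + (norm y / norm x)\<^sup>2) / 2"
proof -
  define B where "B = 1 - 2 * (norm y / norm x) * ((x \<bullet> y) / (norm x * norm y)) + (norm y / norm x)\<^sup>2"
  have "norm x > 0" "x - y \<noteq> 0"
    using assms norm_ge_zero[of y] by (auto simp del: norm_ge_zero)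
  have "(norm (x - y))\<^sup>2 = (norm x)\<^sup>2 - 2 * (x \<bullet> y) + (norm y)\<^sup>2"
    by (simp add: power2_norm_eq_inner inner_diff_left inner_diff_right inner_commute)
  also have "\<dots> = (norm x)\<^sup>2 * B"
    using \<open>norm x > 0\<close> by (cases "y = 0") (simp_all add: B_def field_simps power2_eq_square)
  finally have AB: "(norm (x - y))\<^sup>2 = (norm x)\<^sup>2 * B" .
  then have "B > 0"
    using \<open>norm x > 0\<close> \<open>x - y \<noteq> 0\<close> by (metis zero_less_mult_pos zero_less_norm_iff zero_less_power)
  have "2 * ln (norm (x - y)) = ln ((norm (x - y))\<^sup>2)"
    using \<open>x - y \<noteq> 0\<close> by (simp add: ln_realpow)
  also have "\<dots> = 2 * ln (norm x) + ln B"
    using \<open>norm x > 0\<close> \<open>B > 0\<close> by (simp add: AB ln_mult ln_realpow)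
  finally show ?thesis
    by (simp add: B_def)
qed

section \<open>The multipole expansion\<close>

definition sph_Q :: "real ^ 3 \<Rightarrow> nat \<Rightarrow> int \<Rightarrow> complex" where
  "sph_Q y l m =
    complex_of_real (sqrt (4 * pi / (2 * real l + 1))) * cnj (sph_harm l m (sph_theta y) (sph_phi y))"

lemma sum_norm_sph_harm_sq:
  "(\<Sum>m = - int l..int l. (cmod (sph_harm l m \<theta> \<phi>))\<^sup>2) = (2 * real l + 1) / (4 * pi)"
proof -
  have "sqrt (1 - (cos \<theta>)\<^sup>2) * sqrt (1 - (cos \<theta>)\<^sup>2) = 1 - (cos \<theta>)\<^sup>2"
    by (simp add: abs_square_le_1)
  then have "cos \<theta> * cos \<theta> + sqrt (1 - (cos \<theta>)\<^sup>2) * sqrt (1 - (cos \<theta>)\<^sup>2) * cos (\<phi> - \<phi>) = 1"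
    by (simp add: power2_eq_square)
  moreover have "complex_of_real (\<Sum>m = - int l..int l. (cmod (sph_harm l m \<theta> \<phi>))\<^sup>2) =
      (\<Sum>m = - int l..int l. sph_harm l m \<theta> \<phi> * cnj (sph_harm l m \<theta> \<phi>))"
    by (simp only: of_real_sum complex_norm_square)
  ultimately have "complex_of_real (\<Sum>m = - int l..int l. (cmod (sph_harm l m \<theta> \<phi>))\<^sup>2) =
      complex_of_real ((2 * real l + 1) / (4 * pi))"
    using spherical_harmonics_addition[of l \<theta> \<phi> \<theta> \<phi>] by simp
  then show ?thesis
    by (simp only: of_real_eq_iff)
qed

lemma sum_norm_sph_Q_sq: "(\<Sum>m = - int l..int l. (cmod (sph_Q y l m))\<^sup>2) = 1"
proof -
  define a where "a = 4 * pi / (2 * real l + 1)"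
  have "a > 0"
    by (simp add: a_def)
  then have "(cmod (sph_Q y l m))\<^sup>2 = a * (cmod (sph_harm l m (sph_theta y) (sph_phi y)))\<^sup>2" for m
    by (simp add: sph_Q_def a_def[symmetric] norm_mult power_mult_distrib)
  then have "(\<Sum>m = - int l..int l. (cmod (sph_Q y l m))\<^sup>2) =
      a * (\<Sum>m = - int l..int l. (cmod (sph_harm l m (sph_theta y) (sph_phi y)))\<^sup>2)"
    by (simp add: sum_distrib_left)
  also have "\<dots> = 1"
    by (simp add: sum_norm_sph_harm_sq a_def)
  finally show ?thesis .
qed

lemma sum_sph_Q_mult_sph_harm:
  assumes "x \<noteq> 0" "y \<noteq> 0"
  shows "complex_of_real (sqrt (4 * pi / (2 * real l + 1))) *
      (\<Sum>m = - int l..int l. sph_Q y l m * sph_harm l m (sph_theta x) (sph_phi x)) =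
    complex_of_real (poly (legendre_poly l) ((x \<bullet> y) / (norm x * norm y)))"
proof -
  define a where "a = 4 * pi / (2 * real l + 1)"
  have "a > 0"
    by (simp add: a_def)
  have "complex_of_real (sqrt a) * (\<Sum>m = - int l..int l. sph_Q y l m * sph_harm l m (sph_theta x) (sph_phi x)) =
      complex_of_real a *
      (\<Sum>m = - int l..int l. sph_harm l m (sph_theta x) (sph_phi x) * cnj (sph_harm l m (sph_theta y) (sph_phi y)))"
  proof -
    have "complex_of_real a = complex_of_real (sqrt a) * complex_of_real (sqrt a)"
      using \<open>a > 0\<close> by (simp flip: of_real_mult)
    then show ?thesis
      unfolding sph_Q_def a_def[symmetric] by (simp add: sum_distrib_left mult_ac)
  qed
  also have "\<dots> = complex_of_real (a * ((2 * real l + 1) / (4 * pi)) *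
      poly (legendre_poly l) ((x \<bullet> y) / (norm x * norm y)))"
    using \<open>a > 0\<close> by (simp add: spherical_harmonics_addition cos_angle_sph_coords[OF assms])
  also have "a * ((2 * real l + 1) / (4 * pi)) = 1"
    by (simp add: a_def)
  finally show ?thesis
    by (simp add: a_def)
qed

lemma multipole_series_ln_norm_diff:
  fixes x y :: "real ^ 3"
  assumes "norm y < norm x"
  shows "(\<lambda>k. let n = Suc k in complex_of_real ((norm y ^ n / real n) / norm x ^ n) *
      (\<Sum>l\<le>n. complex_of_real (Lcoef n l * sqrt (4 * pi / (2 * real l + 1))) *
        (\<Sum>m = - int l..int l. sph_Q y l m * sph_harm l m (sph_theta x) (sph_phi x))))
    sums complex_of_real (ln (norm x) - ln (norm (x - y)))"
proof (cases "y = 0")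
  case True
  then show ?thesis
    by (simp add: Let_def)
next
  case False
  define c t where "c = (x \<bullet> y) / (norm x * norm y)" and "t = norm y / norm x"
  have "x \<noteq> 0"
    using assms by auto
  have "\<bar>c\<bar> \<le> 1"
    using Cauchy_Schwarz_ineq2[of x y] \<open>x \<noteq> 0\<close> False by (simp add: c_def abs_divide divide_le_eq_1)
  have "0 \<le> t" "t < 1"
    using assms \<open>x \<noteq> 0\<close> by (simp_all add: t_def field_simps)
  have "(\<Sum>l\<le>n. complex_of_real (Lcoef n l * sqrt (4 * pi / (2 * real l + 1))) *
      (\<Sum>m = - int l..int l. sph_Q y l m * sph_harm l m (sph_theta x) (sph_phi x))) =
    complex_of_real (chebyshev_T n c)" for n
    by (simp only: of_real_mult mult.assoc sum_sph_Q_mult_sph_harm[OF \<open>x \<noteq> 0\<close> False])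
      (simp add: chebyshev_T_legendre_expansion c_def)
  moreover have "(norm y ^ n / real n) / norm x ^ n = t ^ n / real n" for n
    by (simp add: t_def power_divide)
  ultimately have series_term: "(let n = Suc k in complex_of_real ((norm y ^ n / real n) / norm x ^ n) *
      (\<Sum>l\<le>n. complex_of_real (Lcoef n l * sqrt (4 * pi / (2 * real l + 1))) *
        (\<Sum>m = - int l..int l. sph_Q y l m * sph_harm l m (sph_theta x) (sph_phi x)))) =
    complex_of_real (t ^ Suc k / real (Suc k) * chebyshev_T (Suc k) c)" for k
    by (simp only: Let_def of_real_mult)
  have cheb: "chebyshev_T n c = cos (real n * arccos c)" for n
    using \<open>\<bar>c\<bar> \<le> 1\<close> chebyshev_T_cos[of n "arccos c"] by simp
  have "(\<lambda>k. t ^ Suc k / real (Suc k) * cos (real (Suc k) * arccos c)) sums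
      (ln (norm x) - ln (norm (x - y)))"
    unfolding ln_norm_diff[OF assms] t_def[symmetric] c_def[symmetric]
    using log_cos_series[OF \<open>0 \<le> t\<close> \<open>t < 1\<close>, of "arccos c"] \<open>\<bar>c\<bar> \<le> 1\<close>
    by (simp add: cos_arccos_abs)
  then show ?thesis
    unfolding series_term cheb by (rule sums_of_real)
qed

theorem mainTheorem4:
  fixes y :: "real ^ 3"
  shows "\<exists>Q :: nat \<Rightarrow> int \<Rightarrow> complex.
           (\<forall>l. (\<Sum>m = - int l..int l. (cmod (Q l m))\<^sup>2) = 1) \<and>
           (\<forall>x :: real ^ 3. norm x > norm y \<longrightarrow>
              (\<lambda>k. let n = Suc k in
                  complex_of_real ((norm y ^ n / real n) / norm x ^ n) *
                  (\<Sum>l\<le>n. complex_of_real (Lcoef n l * sqrt (4 * pi / (2 * real l + 1))) *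
                     (\<Sum>m = - int l..int l. Q l m * sph_harm l m (sph_theta x) (sph_phi x))))
              sums complex_of_real (ln (norm x) - ln (norm (x - y))))"
  using sum_norm_sph_Q_sq multipole_series_ln_norm_diff by (intro exI[of _ "sph_Q y"]) blast

end
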